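(* Let $N\ge2$, $x_1>\cdots>x_N$ real, and $\mathbf A\in\{-1,1\}^{N\times N}$ with $\mathbf A_{i,n}=\mathrm{sign}(x_i-x_n)$. Then $\mathbf A$ is invertible and $$\mathbf A^{-1}=\frac12\begin{pmatrix}\Delta & -\mathbf e\\ \mathbf e_1^T & 1\end{pmatrix},$$ where $\mathbf e=(0,\dots,0,1)^T\in\mathbb R^{N-1}$ and $\mathbf e_1=(1,0,\dots,0)^T\in\mathbb R^{N-1}$.
   Context: $\mathrm{sign}(x)=1$ if $x\ge0$ and $-1$ if $x<0$. $\Delta\in\mathbb R^{(N-1)\times(N-1)}$ is the finite difference matrix with $\Delta_{i,i}=1$, $\Delta_{i,i+1}=-1$, and all other entries $0$. *)

theory Defs
  imports "Jordan_Normal_Form.Matrix"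
begin

definition sign :: "real \<Rightarrow> real" where
  "sign x = (if x \<ge> 0 then 1 else -1)"

definition fin_diff :: "nat \<Rightarrow> real mat" where
  "fin_diff m = mat m m (\<lambda>(i, j). if j = i then 1 else if j = i + 1 then -1 else 0)"

definition e_last_col :: "nat \<Rightarrow> real mat" where
  "e_last_col m = mat m 1 (\<lambda>(i, _). if i = m - 1 then 1 else 0)"

definition e_first_row :: "nat \<Rightarrow> real mat" where
  "e_first_row m = mat 1 m (\<lambda>(_, j). if j = 0 then 1 else 0)"

definition sign_mat :: "nat \<Rightarrow> (nat \<Rightarrow> real) \<Rightarrow> real mat" where
  "sign_mat N x = mat N N (\<lambda>(i, n). sign (x i - x n))"

end

theory Submission
  imports Defs "Jordan_Normal_Form.Determinant"
begin

text \<open>For strictly decreasing \<open>x\<close> the sign matrix is the staircase matrix \<open>U\<close> with entries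
  \<open>1\<close> on and above the diagonal and \<open>-1\<close> below it. Consecutive rows of \<open>U\<close> differ by twice a
  unit row vector, and its first and last rows add up to twice the last unit row vector; these
  are precisely the rows of twice the claimed inverse \<open>B\<close>, so \<open>B U = 1\<close>. Over a field a
  one-sided inverse of a square matrix is two-sided.\<close>

lemma invertible_matI:
  assumes "A \<in> carrier_mat n n" "B \<in> carrier_mat n n" "A * B = 1\<^sub>m n" "B * A = 1\<^sub>m n"
  shows "invertible_mat A"
  using assms unfolding invertible_mat_def inverts_mat_def by auto

definition staircase_sign_mat :: "nat \<Rightarrow> real mat" where
  "staircase_sign_mat n = mat n n (\<lambda>(i, j). if i \<le> j then 1 else -1)"

definition staircase_sign_inv :: "nat \<Rightarrow> real mat" where
  "staircase_sign_inv m =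
     (1/2) \<cdot>\<^sub>m four_block_mat (fin_diff m) (- e_last_col m) (e_first_row m) (1\<^sub>m 1)"

lemma sign_mat_strictly_decreasing:
  assumes "\<And>i j. i < j \<Longrightarrow> j < N \<Longrightarrow> x j < x i"
  shows "sign_mat N x = staircase_sign_mat N"
proof (rule eq_matI)
  fix i j assume "i < dim_row (staircase_sign_mat N)" "j < dim_col (staircase_sign_mat N)"
  then have "i < N" "j < N" by (simp_all add: staircase_sign_mat_def)
  moreover have "x j \<le> x i \<longleftrightarrow> i \<le> j"
    using assms[of i j] assms[of j i] \<open>i < N\<close> \<open>j < N\<close> by (cases i j rule: linorder_cases) auto
  ultimately show "sign_mat N x $$ (i, j) = staircase_sign_mat N $$ (i, j)"
    by (simp add: sign_mat_def staircase_sign_mat_def sign_def)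
qed (simp_all add: sign_mat_def staircase_sign_mat_def)

lemma staircase_sign_mat_carrier: "staircase_sign_mat n \<in> carrier_mat n n"
  by (simp add: staircase_sign_mat_def)

lemma staircase_sign_inv_carrier: "staircase_sign_inv m \<in> carrier_mat (Suc m) (Suc m)"
  by (rule carrier_matI) (simp_all add: staircase_sign_inv_def fin_diff_def e_last_col_def e_first_row_def)

lemma index_staircase_sign_inv:
  assumes "0 < m" "i \<le> m" "j \<le> m"
  shows "staircase_sign_inv m $$ (i, j) =
    (if i < m then of_bool (j = i) - of_bool (j = i + 1) else of_bool (j = 0) + of_bool (j = m)) / 2"
  using assms
  by (auto simp: staircase_sign_inv_def fin_diff_def e_last_col_def e_first_row_def four_block_mat_def)

lemma staircase_sign_inv_mult:
  assumes "0 < m"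
  shows "staircase_sign_inv m * staircase_sign_mat (Suc m) = 1\<^sub>m (Suc m)"
proof (rule eq_matI)
  let ?B = "staircase_sign_inv m" and ?U = "staircase_sign_mat (Suc m)"
  fix i n assume "i < dim_row (1\<^sub>m (Suc m))" "n < dim_col (1\<^sub>m (Suc m))"
  then have i: "i \<le> m" and n: "n \<le> m" by auto
  have "(?B * ?U) $$ (i, n) = (\<Sum>k<Suc m. ?B $$ (i, k) * ?U $$ (k, n))"
    using i n staircase_sign_inv_carrier[of m] staircase_sign_mat_carrier[of "Suc m"]
    by (simp add: scalar_prod_def atLeast0LessThan)
  also have "\<dots> = (if i < m then ?U $$ (i, n) - ?U $$ (i + 1, n) else ?U $$ (0, n) + ?U $$ (m, n)) / 2"
    using i assms by (simp add: index_staircase_sign_inv sum_divide_distrib[symmetric]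
       left_diff_distrib distrib_right sum_subtractf sum.distrib)
  also have "\<dots> = 1\<^sub>m (Suc m) $$ (i, n)"
    using i n by (auto simp: staircase_sign_mat_def)
  finally show "(?B * ?U) $$ (i, n) = 1\<^sub>m (Suc m) $$ (i, n)" .
qed (use staircase_sign_inv_carrier[of m] staircase_sign_mat_carrier[of "Suc m"] in auto)

lemma mult_staircase_sign_inv:
  assumes "0 < m"
  shows "staircase_sign_mat (Suc m) * staircase_sign_inv m = 1\<^sub>m (Suc m)"
  using mat_mult_left_right_inverse[OF staircase_sign_inv_carrier staircase_sign_mat_carrier
      staircase_sign_inv_mult[OF assms]] .

theorem lemma21:
  fixes N :: nat and x :: "nat \<Rightarrow> real"
  assumes "N \<ge> 2"
    and "\<And>i j. i < j \<Longrightarrow> j < N \<Longrightarrow> x i > x j"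
  shows "invertible_mat (sign_mat N x) \<and>
    (let B = (1/2) \<cdot>\<^sub>m four_block_mat (fin_diff (N - 1)) (- e_last_col (N - 1))
                  (e_first_row (N - 1)) (1\<^sub>m 1)
     in sign_mat N x * B = 1\<^sub>m N \<and> B * sign_mat N x = 1\<^sub>m N)"
proof -
  define m where "m = N - 1"
  have N: "N = Suc m" and "0 < m"
    using assms(1) by (simp_all add: m_def)
  have A: "sign_mat N x = staircase_sign_mat N"
    using assms(2) by (rule sign_mat_strictly_decreasing)
  have AB: "sign_mat N x * staircase_sign_inv m = 1\<^sub>m N"
    unfolding A using \<open>0 < m\<close> by (simp add: N mult_staircase_sign_inv)
  have BA: "staircase_sign_inv m * sign_mat N x = 1\<^sub>m N"
    unfolding A using \<open>0 < m\<close> by (simp add: N staircase_sign_inv_mult)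
  have "invertible_mat (sign_mat N x)"
    using AB BA staircase_sign_inv_carrier[of m] by (intro invertible_matI) (simp_all add: N sign_mat_def)
  with AB BA show ?thesis
    by (simp add: m_def staircase_sign_inv_def)
qed

end
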